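(* Let $d\ge 3$ be an integer and let $(x,y)$ be an integer solution of \[ d(2x+d+1)\left(x^2+(d+1)x+\frac{d(d+1)}{2}\right)=2y^3 . \] Then there are integers $y_1,y_2$ and a pair $(\alpha,\beta)\in\mathcal{A}_d^{(3)}$ such that \[ 2x+d+1=\alpha y_1^3,\qquad x^2+(d+1)x+\frac{d(d+1)}{2}=\beta y_2^3 . \]
   Context: For an integer $m$, $[m]\in\{0,1,2\}$ denotes the residue with $m\equiv[m]\pmod 3$. For a prime $q$ let $\mu_q=\operatorname{ord}_q(d^2-1)$ and $\nu_q=\operatorname{ord}_q(d)$. To each prime $q$ associate a set $T_q\subseteq\{0,1,2\}^2$: if $q\nmid d(d^2-1)$, $T_q=\{(0,0)\}$. For $q=2$: $T_2=\{(0,[1-\nu_2])\}$ if $2\mid d$; $T_2=\{(1,0),(0,1),(2,2)\}$ if $2\nmid d$ and $\mu_2\ge 4$; $T_2=\{(1,0),(0,1)\}$ if $2\nmid d$ and $\mu_2=3$. For odd $q\mid d$: $T_q=\{([-\nu_q],0),(0,[-\nu_q])\}$. For odd $q\mid d^2-1$: $T_q=\{(0,0),(1,2),(2,1)\}$ if $\mu_q\ge 2$, and $T_q=\{(0,0),(2,1)\}$ if $\mu_q=1$. Then $\mathcal{A}_d^{(3)}$ is the set of pairs of positive integers $(\alpha,\beta)$ with $(\operatorname{ord}_q(\alpha),\operatorname{ord}_q(\beta))\in T_q$ for every prime $q$. *)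

theory Defs
  imports "HOL-Computational_Algebra.Primes"
begin

definition res3 :: "int \<Rightarrow> nat" where
  "res3 m = nat (m mod 3)"

definition Tset :: "int \<Rightarrow> int \<Rightarrow> (nat \<times> nat) set" where
  "Tset d q =
    (let mu = multiplicity q (d^2 - 1); nu = multiplicity q d in
     if \<not> q dvd d * (d^2 - 1) then {(0, 0)}
     else if q = 2 then
       (if q dvd d then {(0, res3 (1 - int nu))}
        else if mu \<ge> 4 then {(1, 0), (0, 1), (2, 2)}
        else if mu = 3 then {(1, 0), (0, 1)}
        else {})
     else if q dvd d then {(res3 (- int nu), 0), (0, res3 (- int nu))}
     else if mu \<ge> 2 then {(0, 0), (1, 2), (2, 1)}
     else if mu = 1 then {(0, 0), (2, 1)}
     else {})"

definition A3 :: "int \<Rightarrow> (int \<times> int) set" where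
  "A3 d = {(\<alpha>, \<beta>). \<alpha> > 0 \<and> \<beta> > 0 \<and>
      (\<forall>q::int. prime q \<longrightarrow> (multiplicity q \<alpha>, multiplicity q \<beta>) \<in> Tset d q)}"

end

theory Submission
  imports Defs
begin

text \<open>
  Put \<open>A = 2x + d + 1\<close> and \<open>B = x\<^sup>2 + (d + 1)x + d(d + 1)/2\<close>, so that \<open>d A B = 2 y\<^sup>3\<close>
  and \<open>4B = A\<^sup>2 + (d\<^sup>2 - 1)\<close>. Every nonzero integer is its cube-free part times a cube, so
  take \<open>\<alpha>\<close>, \<open>\<beta>\<close> to be the cube-free parts of \<open>A\<close> and \<open>B\<close>. At a prime \<open>q\<close> the
  valuations satisfy \<open>ord d + ord A + ord B \<equiv> [q = 2] (mod 3)\<close>; a common prime factor of \<open>A\<close>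
  and \<open>B\<close> divides \<open>d\<^sup>2 - 1\<close>, and if \<open>q\<close> divides \<open>A\<close> often enough then \<open>4B\<close> and
  \<open>d\<^sup>2 - 1\<close> have the same valuation. Reducing these constraints mod 3 gives exactly \<open>T\<^sub>q\<close>.
  If \<open>A = 0\<close>, take \<open>y\<^sub>1 = 0\<close> and let \<open>\<alpha>\<close> be the cube-free part of \<open>2 d\<^sup>2 B\<^sup>2\<close> instead:
  it satisfies the same constraints because \<open>d (2 d\<^sup>2 B\<^sup>2) B\<close> is again twice a cube.
\<close>

definition cube_free_part :: "int \<Rightarrow> int" where
  "cube_free_part n = (\<Prod>p\<in>prime_factors n. p ^ (multiplicity p n mod 3))"

lemma cube_free_part_pos: "cube_free_part n > 0"
  unfolding cube_free_part_def by (intro prod_pos) (auto intro: zero_less_power prime_gt_0_int)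

lemma multiplicity_cube_free_part:
  assumes "prime q"
  shows "multiplicity q (cube_free_part n) = multiplicity q n mod 3"
proof -
  have "multiplicity q (cube_free_part n) =
          (if q \<in> prime_factors n then multiplicity q n mod 3 else 0)"
    unfolding cube_free_part_def using assms by (intro multiplicity_prod_prime_powers) auto
  then show ?thesis
    using assms by (auto simp: prime_factors_multiplicity)
qed

lemma cube_free_part_times_cube:
  assumes "n \<noteq> 0"
  shows "\<exists>w. n = cube_free_part n * w ^ 3"
proof -
  define c where "c = (\<Prod>p\<in>prime_factors n. p ^ (multiplicity p n div 3))"
  have "\<bar>n\<bar> = (\<Prod>p\<in>prime_factors n. p ^ multiplicity p n)"
    using prod_prime_factors[OF assms] by simp
  also have "\<dots> = (\<Prod>p\<in>prime_factors n. p ^ (multiplicity p n mod 3) * (p ^ (multiplicity p n div 3)) ^ 3)"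
    by (intro prod.cong refl) (metis mod_div_mult_eq power_add power_mult)
  also have "\<dots> = cube_free_part n * c ^ 3"
    by (simp add: cube_free_part_def c_def prod.distrib prod_power_distrib)
  finally have "\<bar>n\<bar> = cube_free_part n * c ^ 3" .
  then have "n = cube_free_part n * (sgn n * c) ^ 3"
    by (cases "n > 0") (auto simp: power_mult_distrib sgn_if)
  then show ?thesis ..
qed

lemma res3_mod_sum: "res3 (int ((n + b) mod 3) - int n) = b mod 3"
proof -
  have "(int ((n + b) mod 3) - int n) mod 3 = int (b mod 3)"
    by (simp only: of_nat_mod of_nat_add) presburger
  then show ?thesis unfolding res3_def by simp
qed

lemma multiplicity_add_eq:
  fixes p x y :: "'a :: factorial_semiring"
  assumes "y \<noteq> 0" "\<not> is_unit p" "p ^ Suc (multiplicity p y) dvd x"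
  shows "multiplicity p (x + y) = multiplicity p y"
proof (rule multiplicity_eqI)
  have "p ^ multiplicity p y dvd x"
    using assms(3) by (rule dvd_trans[rotated]) (simp add: le_imp_power_dvd)
  then show "p ^ multiplicity p y dvd x + y"
    by (simp add: multiplicity_dvd)
  show "\<not> p ^ Suc (multiplicity p y) dvd x + y"
    using assms by (metis dvd_add_right_iff power_dvd_iff_le_multiplicity not_less_eq_eq le_refl)
qed

lemma multiplicity_of_two:
  fixes q :: int
  assumes "prime q"
  shows "multiplicity q 2 = (if q = 2 then 1 else 0)"
  using assms by (auto simp: multiplicity_self prime_multiplicity_other)

lemma multiplicity_power_two_mult:
  fixes q x :: int
  assumes "prime q" "x \<noteq> 0"
  shows "multiplicity q (2 ^ k * x) = (if q = 2 then k else 0) + multiplicity q x"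
  using assms prime_imp_prime_elem[OF assms(1)] multiplicity_of_two[OF assms(1)]
  by (simp add: prime_elem_multiplicity_mult_distrib prime_elem_multiplicity_power_distrib)

lemma multiplicity_mod3_eq_twice_cube:
  fixes q d u v z :: int
  assumes q: "prime q" and eq: "d * u * v = 2 * z ^ 3" and nonzero: "d \<noteq> 0" "u \<noteq> 0" "v \<noteq> 0"
  shows "(multiplicity q d + multiplicity q u + multiplicity q v) mod 3 = (if q = 2 then 1 else 0)"
proof -
  have "z \<noteq> 0" using eq nonzero by auto
  have "multiplicity q d + multiplicity q u + multiplicity q v = multiplicity q (d * u * v)"
    using nonzero prime_imp_prime_elem[OF q] by (simp add: prime_elem_multiplicity_mult_distrib)
  also have "\<dots> = (if q = 2 then 1 else 0) + 3 * multiplicity q z"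
    using eq multiplicity_power_two_mult[OF q, of "z ^ 3" 1] \<open>z \<noteq> 0\<close> prime_imp_prime_elem[OF q]
    by (simp add: prime_elem_multiplicity_power_distrib)
  finally show ?thesis by simp
qed

lemma eight_dvd_odd_square_minus_one:
  fixes d :: int
  assumes "odd d"
  shows "8 dvd d^2 - 1"
proof -
  obtain k where "d = 2 * k + 1" using assms by (rule oddE)
  then have "d^2 - 1 = 4 * (k * (k + 1))" by (simp add: power2_eq_square algebra_simps)
  moreover have "even (k * (k + 1))" by simp
  ultimately show ?thesis by fastforce
qed

lemma residues_in_Tset_two:
  fixes d :: int and a b :: nat
  assumes "d^2 \<noteq> 1"
    and sum: "(multiplicity 2 d + a + b) mod 3 = 1"
    and mu3: "multiplicity 2 (d^2 - 1) = 3 \<Longrightarrow> a \<ge> 2 \<Longrightarrow> b = 1"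
    and even: "even d \<Longrightarrow> a = 0"
  shows "(a mod 3, b mod 3) \<in> Tset d 2"
proof (cases "even d")
  case True
  then have "Tset d 2 = {(0, res3 (1 - int (multiplicity 2 d)))}"
    by (simp add: Tset_def)
  moreover have "res3 (1 - int (multiplicity 2 d)) = b mod 3"
    using res3_mod_sum[of "multiplicity 2 d" b] sum even[OF True] by simp
  ultimately show ?thesis using even[OF True] by simp
next
  case False
  then have "multiplicity 2 d = 0"
    by (simp add: not_dvd_imp_multiplicity_0)
  with sum have ab: "(a + b) mod 3 = 1" by simp
  have "(2::int) ^ 3 dvd d^2 - 1"
    using eight_dvd_odd_square_minus_one[OF False] by simp
  then have "multiplicity 2 (d^2 - 1) \<ge> 3"
    using assms(1) by (intro multiplicity_geI) auto
  then consider "multiplicity 2 (d^2 - 1) \<ge> 4" | "multiplicity 2 (d^2 - 1) = 3"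
    by linarith
  then show ?thesis
  proof cases
    case 1
    with False have "Tset d 2 = {(1, 0), (0, 1), (2, 2)}"
      by (simp add: Tset_def)
    moreover have "a mod 3 = 1 \<and> b mod 3 = 0 \<or> a mod 3 = 0 \<and> b mod 3 = 1 \<or> a mod 3 = 2 \<and> b mod 3 = 2"
      using ab by presburger
    ultimately show ?thesis by auto
  next
    case 2
    with False have "Tset d 2 = {(1, 0), (0, 1)}"
      by (simp add: Tset_def)
    moreover have "a mod 3 = 1 \<and> b mod 3 = 0 \<or> a mod 3 = 0 \<and> b mod 3 = 1"
      using ab mu3[OF 2] by presburger
    ultimately show ?thesis by auto
  qed
qed

lemma residues_in_Tset_odd:
  fixes d q :: int and a b :: nat
  assumes q: "prime q" "q \<noteq> 2" and "d^2 \<noteq> 1"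
    and sum: "(multiplicity q d + a + b) mod 3 = 0"
    and coprime: "\<not> q dvd d^2 - 1 \<Longrightarrow> a = 0 \<or> b = 0"
    and mu1: "multiplicity q (d^2 - 1) = 1 \<Longrightarrow> a \<ge> 1 \<Longrightarrow> b = 1"
  shows "(a mod 3, b mod 3) \<in> Tset d q"
proof (cases "q dvd d")
  case True
  have "\<not> q dvd d^2 - 1"
  proof
    assume "q dvd d^2 - 1"
    moreover have "q dvd d^2" using True by (simp add: power2_eq_square)
    ultimately have "q dvd 1" by (metis dvd_diff_right_iff)
    with q show False by (simp add: prime_int_iff)
  qed
  then have ab: "a = 0 \<or> b = 0" by (rule coprime)
  define r where "r = res3 (- int (multiplicity q d))"
  from True q have T: "Tset d q = {(r, 0), (0, r)}"
    unfolding Tset_def r_def by (simp only: Let_def) simp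
  from ab show ?thesis
  proof
    assume "a = 0"
    then have "b mod 3 = r"
      using res3_mod_sum[of "multiplicity q d" b] sum by (simp add: r_def)
    with \<open>a = 0\<close> show ?thesis by (simp add: T)
  next
    assume "b = 0"
    then have "a mod 3 = r"
      using res3_mod_sum[of "multiplicity q d" a] sum by (simp add: r_def)
    with \<open>b = 0\<close> show ?thesis by (simp add: T)
  qed
next
  case False
  then have ab: "(a + b) mod 3 = 0"
    using sum by (simp add: not_dvd_imp_multiplicity_0)
  show ?thesis
  proof (cases "q dvd d^2 - 1")
    case False
    with \<open>\<not> q dvd d\<close> q have "Tset d q = {(0, 0)}"
      by (simp add: Tset_def prime_dvd_mult_iff)
    moreover have "a mod 3 = 0 \<and> b mod 3 = 0"
      using ab coprime[OF False] by presburger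
    ultimately show ?thesis by simp
  next
    case True
    then have "multiplicity q (d^2 - 1) \<ge> 1"
      using q \<open>d^2 \<noteq> 1\<close> by (intro multiplicity_geI) (auto simp: prime_elem_not_unit)
    then consider "multiplicity q (d^2 - 1) \<ge> 2" | "multiplicity q (d^2 - 1) = 1"
      by linarith
    then show ?thesis
    proof cases
      case 1
      with True \<open>\<not> q dvd d\<close> q have "Tset d q = {(0, 0), (1, 2), (2, 1)}"
        by (simp add: Tset_def)
      moreover have "a mod 3 = 0 \<and> b mod 3 = 0 \<or> a mod 3 = 1 \<and> b mod 3 = 2 \<or> a mod 3 = 2 \<and> b mod 3 = 1"
        using ab by presburger
      ultimately show ?thesis by auto
    next
      case 2
      with True \<open>\<not> q dvd d\<close> q have "Tset d q = {(0, 0), (2, 1)}"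
        by (simp add: Tset_def)
      moreover have "a mod 3 = 0 \<and> b mod 3 = 0 \<or> a mod 3 = 2 \<and> b mod 3 = 1"
        using ab mu1[OF 2] by presburger
      ultimately show ?thesis by auto
    qed
  qed
qed

text \<open>The exponent \<open>a\<close> need not be the valuation of \<open>A\<close>; this also covers \<open>A = 0\<close>.\<close>

lemma residues_in_Tset:
  fixes d A B q :: int and a :: nat
  assumes "d \<ge> 2" and eq: "4 * B = A^2 + (d^2 - 1)" and q: "prime q"
    and dvd_A: "q ^ a dvd A"
    and sum: "(multiplicity q d + a + multiplicity q B) mod 3 = (if q = 2 then 1 else 0)"
  shows "(a mod 3, multiplicity q B mod 3) \<in> Tset d q"
proof -
  define \<mu> where "\<mu> = multiplicity q (d^2 - 1)"
  have "d^2 \<ge> 2^2" using \<open>d \<ge> 2\<close> by (intro power_mono) auto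
  then have D: "d^2 - 1 > 0" by simp
  with eq have "B \<noteq> 0" using zero_le_power2[of A] by linarith
  have ord_4B: "multiplicity q (4 * B) = (if q = 2 then 2 else 0) + multiplicity q B"
    using multiplicity_power_two_mult[OF q \<open>B \<noteq> 0\<close>, of 2] by simp
  have ord_B: "multiplicity q B = \<mu> - (if q = 2 then 2 else 0)" if "q ^ Suc \<mu> dvd A^2"
  proof -
    have "multiplicity q (A^2 + (d^2 - 1)) = \<mu>"
      unfolding \<mu>_def using D that q by (intro multiplicity_add_eq) (auto simp: \<mu>_def prime_elem_not_unit)
    with ord_4B eq show ?thesis by simp
  qed
  have dvd_A_power: "q ^ k dvd A" if "k \<le> a" for k
    using dvd_A by (rule dvd_trans[rotated]) (simp add: le_imp_power_dvd that)
  show ?thesis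
  proof (cases "q = 2")
    case True
    show ?thesis
      unfolding True
    proof (rule residues_in_Tset_two)
      show "d^2 \<noteq> 1" using D by simp
      show "(multiplicity 2 d + a + multiplicity 2 B) mod 3 = 1" using sum True by simp
      show "multiplicity 2 B = 1" if "multiplicity 2 (d^2 - 1) = 3" "a \<ge> 2"
      proof -
        obtain k where "A = q^2 * k" using dvd_A_power[OF \<open>a \<ge> 2\<close>] by (rule dvdE)
        then have "q ^ Suc \<mu> dvd A^2" using that True by (simp add: \<mu>_def power2_eq_square)
        then show ?thesis using ord_B True that by (simp add: \<mu>_def)
      qed
      show "a = 0" if "even d"
      proof (rule ccontr)
        assume "a \<noteq> 0"
        then have "even A" using dvd_A_power[of 1] True by simp
        with \<open>even d\<close> have "even (A^2 + (d^2 - 1) - 4 * B + 1)" by simp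
        with eq show False by simp
      qed
    qed
  next
    case False
    show ?thesis
    proof (rule residues_in_Tset_odd[OF q False])
      show "d^2 \<noteq> 1" using D by simp
      show "(multiplicity q d + a + multiplicity q B) mod 3 = 0" using sum False by simp
      show "a = 0 \<or> multiplicity q B = 0" if "\<not> q dvd d^2 - 1"
      proof (rule ccontr)
        assume "\<not> (a = 0 \<or> multiplicity q B = 0)"
        then have "q dvd A" "q dvd B"
          using dvd_A_power[of 1] multiplicity_dvd'[of 1 q B] by auto
        then have "q dvd 4 * B - A^2" by (simp add: power2_eq_square)
        with eq that show False by simp
      qed
      show "multiplicity q B = 1" if "multiplicity q (d^2 - 1) = 1" "a \<ge> 1"
      proof -
        obtain k where "A = q^1 * k" using dvd_A_power[OF \<open>a \<ge> 1\<close>] by (rule dvdE)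
        then have "q ^ Suc \<mu> dvd A^2" using that by (simp add: \<mu>_def power2_eq_square)
        then show ?thesis using ord_B False that by (simp add: \<mu>_def)
      qed
    qed
  qed
qed

lemma four_times_quadratic_eq:
  fixes d x :: int
  shows "4 * (x^2 + (d + 1) * x + d * (d + 1) div 2) = (2 * x + d + 1)^2 + (d^2 - 1)"
proof -
  have "even (d * (d + 1))" by simp
  then obtain K where K: "d * (d + 1) = 2 * K" by (rule evenE)
  then have half: "d * (d + 1) div 2 = K" by simp
  show ?thesis unfolding half using K by algebra
qed

lemma cube_free_factor_of_twice_cube:
  fixes d A B y :: int
  assumes eq: "d * A * B = 2 * y ^ 3" and "d \<noteq> 0" "B \<noteq> 0"
  shows "\<exists>u z w. u \<noteq> 0 \<and> d * u * B = 2 * z ^ 3 \<and> A = cube_free_part u * w ^ 3 \<and>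
           (\<forall>q. q ^ multiplicity q u dvd A)"
proof (cases "A = 0")
  case True
  have "d * (2 * d^2 * B^2) * B = 2 * (d * B) ^ 3" by algebra
  with True assms show ?thesis
    by (intro exI[of _ "2 * d^2 * B^2"] exI[of _ "d * B"] exI[of _ 0]) simp
next
  case False
  then obtain w where "A = cube_free_part A * w ^ 3" using cube_free_part_times_cube by blast
  with False eq show ?thesis by (intro exI[of _ A] exI[of _ y] exI[of _ w]) (simp add: multiplicity_dvd)
qed

theorem lemma8p1:
  fixes d x y :: int
  assumes "d \<ge> 3"
    and "d * (2 * x + d + 1) * (x^2 + (d + 1) * x + d * (d + 1) div 2) = 2 * y^3"
  shows "\<exists>y1 y2 \<alpha> \<beta> :: int. (\<alpha>, \<beta>) \<in> A3 d \<and>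
           2 * x + d + 1 = \<alpha> * y1^3 \<and>
           x^2 + (d + 1) * x + d * (d + 1) div 2 = \<beta> * y2^3"
proof -
  define A where "A = 2 * x + d + 1"
  define B where "B = x^2 + (d + 1) * x + d * (d + 1) div 2"
  have eq: "4 * B = A^2 + (d^2 - 1)"
    unfolding A_def B_def by (rule four_times_quadratic_eq)
  have "d^2 \<ge> 9" using power_mono[OF \<open>3 \<le> d\<close>, of 2] by simp
  with eq have "B \<noteq> 0" using zero_le_power2[of A] by linarith
  have "d * A * B = 2 * y ^ 3" using assms(2) unfolding A_def B_def .
  moreover have "d \<noteq> 0" using \<open>d \<ge> 3\<close> by simp
  ultimately obtain u z w where "u \<noteq> 0" and u: "d * u * B = 2 * z ^ 3"
    and w: "A = cube_free_part u * w ^ 3" and dvd_A: "\<And>q. q ^ multiplicity q u dvd A"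
    using cube_free_factor_of_twice_cube \<open>B \<noteq> 0\<close> by blast
  have "(cube_free_part u, cube_free_part B) \<in> A3 d"
    unfolding A3_def
  proof (clarsimp simp: cube_free_part_pos multiplicity_cube_free_part)
    fix q :: int
    assume "prime q"
    then show "(multiplicity q u mod 3, multiplicity q B mod 3) \<in> Tset d q"
      using \<open>d \<ge> 3\<close> \<open>u \<noteq> 0\<close> \<open>B \<noteq> 0\<close>
      by (intro residues_in_Tset[OF _ eq _ dvd_A] multiplicity_mod3_eq_twice_cube[OF _ u]) auto
  qed
  moreover obtain v where "B = cube_free_part B * v ^ 3"
    using cube_free_part_times_cube \<open>B \<noteq> 0\<close> by blast
  ultimately show ?thesis using w unfolding A_def B_def by blast
qed

end
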